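(* Let $\mathcal X\subseteq\mathcal P(\omega)$ be a family of nonempty sets and let $\mathcal Z\subseteq\mathcal P(\omega)$ be closed under supersets. Then the games $\mathfrak G(\mathcal X,\omega,\mathcal Z^c)$ and $\mathfrak G(\mathcal X,[\omega]^{<\omega},\mathcal Z^c)$ are equivalent: a player has a winning strategy in one game if and only if the same player has a winning strategy in the other.
   Context: $\mathcal Z^c=\mathcal P(\omega)\setminus\mathcal Z$. Game $\mathfrak G(\mathcal X,\omega,\mathcal W)$: at each stage $k\in\omega$, player I chooses $X_k\in\mathcal X$ and player II responds with $n_k\in X_k$; II wins if $\{n_k:k\in\omega\}\in\mathcal W$. Game $\mathfrak G(\mathcal X,[\omega]^{<\omega},\mathcal W)$: at each stage $k$, player I chooses $X_k\in\mathcal X$ and player II responds with a nonempty finite set $s_k\subseteq X_k$; II wins if $\bigcup_k s_k\in\mathcal W$. In each game I wins when II does not. *)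

theory Defs
  imports Main
begin

text \<open>Game G(X, omega, W): at stage k player I plays X_k in X, player II answers n_k in X_k;
II wins iff {n_k | k} in W.
A strategy for I maps the finite history of II's previous moves to I's next move;
a strategy for II maps the finite history of I's moves (X_0,...,X_k) to II's answer.\<close>

definition strategy_I_pt :: "nat set set \<Rightarrow> (nat list \<Rightarrow> nat set) \<Rightarrow> bool" where
  "strategy_I_pt \<X> \<sigma> \<longleftrightarrow> (\<forall>h. \<sigma> h \<in> \<X>)"

definition play_I_pt :: "(nat list \<Rightarrow> nat set) \<Rightarrow> (nat \<Rightarrow> nat) \<Rightarrow> bool" where
  "play_I_pt \<sigma> n \<longleftrightarrow> (\<forall>k. n k \<in> \<sigma> (map n [0..<k]))"

definition winning_I_pt :: "nat set set \<Rightarrow> nat set set \<Rightarrow> (nat list \<Rightarrow> nat set) \<Rightarrow> bool" where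
  "winning_I_pt \<X> \<W> \<sigma> \<longleftrightarrow> strategy_I_pt \<X> \<sigma> \<and>
     (\<forall>n. play_I_pt \<sigma> n \<longrightarrow> range n \<notin> \<W>)"

definition strategy_II_pt :: "nat set set \<Rightarrow> (nat set list \<Rightarrow> nat) \<Rightarrow> bool" where
  "strategy_II_pt \<X> \<tau> \<longleftrightarrow> (\<forall>xs. xs \<noteq> [] \<and> set xs \<subseteq> \<X> \<longrightarrow> \<tau> xs \<in> last xs)"

definition winning_II_pt :: "nat set set \<Rightarrow> nat set set \<Rightarrow> (nat set list \<Rightarrow> nat) \<Rightarrow> bool" where
  "winning_II_pt \<X> \<W> \<tau> \<longleftrightarrow> strategy_II_pt \<X> \<tau> \<and>
     (\<forall>x. (\<forall>k. x k \<in> \<X>) \<longrightarrow> range (\<lambda>k. \<tau> (map x [0..<Suc k])) \<in> \<W>)"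

text \<open>Game G(X, [omega]^<omega, W): II answers with a nonempty finite s_k \<subseteq> X_k;
II wins iff the union of the s_k is in W.\<close>

definition strategy_I_fin :: "nat set set \<Rightarrow> (nat set list \<Rightarrow> nat set) \<Rightarrow> bool" where
  "strategy_I_fin \<X> \<sigma> \<longleftrightarrow> (\<forall>h. \<sigma> h \<in> \<X>)"

definition play_I_fin :: "(nat set list \<Rightarrow> nat set) \<Rightarrow> (nat \<Rightarrow> nat set) \<Rightarrow> bool" where
  "play_I_fin \<sigma> s \<longleftrightarrow>
     (\<forall>k. s k \<noteq> {} \<and> finite (s k) \<and> s k \<subseteq> \<sigma> (map s [0..<k]))"

definition winning_I_fin :: "nat set set \<Rightarrow> nat set set \<Rightarrow> (nat set list \<Rightarrow> nat set) \<Rightarrow> bool" where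
  "winning_I_fin \<X> \<W> \<sigma> \<longleftrightarrow> strategy_I_fin \<X> \<sigma> \<and>
     (\<forall>s. play_I_fin \<sigma> s \<longrightarrow> (\<Union>k. s k) \<notin> \<W>)"

definition strategy_II_fin :: "nat set set \<Rightarrow> (nat set list \<Rightarrow> nat set) \<Rightarrow> bool" where
  "strategy_II_fin \<X> \<tau> \<longleftrightarrow> (\<forall>xs. xs \<noteq> [] \<and> set xs \<subseteq> \<X> \<longrightarrow>
      \<tau> xs \<noteq> {} \<and> finite (\<tau> xs) \<and> \<tau> xs \<subseteq> last xs)"

definition winning_II_fin :: "nat set set \<Rightarrow> nat set set \<Rightarrow> (nat set list \<Rightarrow> nat set) \<Rightarrow> bool" where
  "winning_II_fin \<X> \<W> \<tau> \<longleftrightarrow> strategy_II_fin \<X> \<tau> \<and>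
     (\<forall>x. (\<forall>k. x k \<in> \<X>) \<longrightarrow> (\<Union>k. \<tau> (map x [0..<Suc k])) \<in> \<W>)"

end

theory Submission
  imports Defs
begin

text \<open>Since \<open>\<Z>\<close> is closed under supersets, the winning set \<open>- \<Z>\<close> of player II is closed
under subsets. A point move \<open>n\<close> is the same as the finite move \<open>{n}\<close>, and a finite move \<open>s\<close>
contains the point move \<open>some_elem s\<close>, whose outcome is a subset of the outcome of the
finite play. So each player can transfer a winning strategy from one game to the other
by translating moves in the appropriate direction.\<close>

lemma play_I_fin_some_elem_imp_play_I_pt:
  assumes "play_I_fin (\<lambda>h. \<sigma> (map some_elem h)) s"
  shows "play_I_pt \<sigma> (some_elem \<circ> s)"
  unfolding play_I_pt_def
proof
  fix k
  have "s k \<noteq> {}"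
    using assms unfolding play_I_fin_def by blast
  then have "some_elem (s k) \<in> s k"
    by (rule some_elem_nonempty)
  also have "\<dots> \<subseteq> \<sigma> (map some_elem (map s [0..<k]))"
    using assms unfolding play_I_fin_def by blast
  finally show "(some_elem \<circ> s) k \<in> \<sigma> (map (some_elem \<circ> s) [0..<k])"
    by simp
qed

lemma winning_I_pt_imp_winning_I_fin:
  assumes down: "\<And>A B. B \<in> \<W> \<Longrightarrow> A \<subseteq> B \<Longrightarrow> A \<in> \<W>"
    and win: "winning_I_pt \<X> \<W> \<sigma>"
  shows "winning_I_fin \<X> \<W> (\<lambda>h. \<sigma> (map some_elem h))"
  unfolding winning_I_fin_def strategy_I_fin_def
proof (intro conjI allI impI)
  fix h
  show "\<sigma> (map some_elem h) \<in> \<X>"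
    using win unfolding winning_I_pt_def strategy_I_pt_def by blast
next
  fix s
  assume play: "play_I_fin (\<lambda>h. \<sigma> (map some_elem h)) s"
  then have "range (some_elem \<circ> s) \<notin> \<W>"
    using win play_I_fin_some_elem_imp_play_I_pt unfolding winning_I_pt_def by blast
  moreover have "some_elem (s k) \<in> s k" for k
    using play unfolding play_I_fin_def by (simp add: some_elem_nonempty)
  then have "range (some_elem \<circ> s) \<subseteq> (\<Union>k. s k)"
    by auto
  ultimately show "(\<Union>k. s k) \<notin> \<W>"
    using down by blast
qed

lemma winning_I_fin_imp_winning_I_pt:
  assumes win: "winning_I_fin \<X> \<W> \<sigma>"
  shows "winning_I_pt \<X> \<W> (\<lambda>h. \<sigma> (map (\<lambda>n. {n}) h))"
  unfolding winning_I_pt_def strategy_I_pt_def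
proof (intro conjI allI impI)
  fix h
  show "\<sigma> (map (\<lambda>n. {n}) h) \<in> \<X>"
    using win unfolding winning_I_fin_def strategy_I_fin_def by blast
next
  fix n
  assume "play_I_pt (\<lambda>h. \<sigma> (map (\<lambda>n. {n}) h)) n"
  then have "play_I_fin \<sigma> (\<lambda>k. {n k})"
    unfolding play_I_fin_def play_I_pt_def by (simp add: comp_def)
  then have "(\<Union>k. {n k}) \<notin> \<W>"
    using win unfolding winning_I_fin_def by blast
  then show "range n \<notin> \<W>"
    by (simp add: UNION_singleton_eq_range)
qed

lemma winning_II_pt_imp_winning_II_fin:
  assumes win: "winning_II_pt \<X> \<W> \<tau>"
  shows "winning_II_fin \<X> \<W> (\<lambda>xs. {\<tau> xs})"
  using win
  unfolding winning_II_fin_def strategy_II_fin_def winning_II_pt_def strategy_II_pt_def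
  by (simp add: UNION_singleton_eq_range)

lemma winning_II_fin_imp_winning_II_pt:
  assumes down: "\<And>A B. B \<in> \<W> \<Longrightarrow> A \<subseteq> B \<Longrightarrow> A \<in> \<W>"
    and win: "winning_II_fin \<X> \<W> \<tau>"
  shows "winning_II_pt \<X> \<W> (\<lambda>xs. some_elem (\<tau> xs))"
  unfolding winning_II_pt_def strategy_II_pt_def
proof (intro conjI allI impI)
  fix xs :: "nat set list"
  assume "xs \<noteq> [] \<and> set xs \<subseteq> \<X>"
  then have "\<tau> xs \<noteq> {} \<and> \<tau> xs \<subseteq> last xs"
    using win unfolding winning_II_fin_def strategy_II_fin_def by blast
  then show "some_elem (\<tau> xs) \<in> last xs"
    using some_elem_nonempty by (metis subsetD)
next
  fix x :: "nat \<Rightarrow> nat set"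
  assume moves: "\<forall>k. x k \<in> \<X>"
  let ?answer = "\<lambda>k. \<tau> (map x [0..<Suc k])"
  have "map x [0..<Suc k] \<noteq> [] \<and> set (map x [0..<Suc k]) \<subseteq> \<X>" for k
    using moves by auto
  then have "?answer k \<noteq> {}" for k
    using win unfolding winning_II_fin_def strategy_II_fin_def by blast
  then have "some_elem (?answer k) \<in> ?answer k" for k
    by (rule some_elem_nonempty)
  then have "range (\<lambda>k. some_elem (?answer k)) \<subseteq> (\<Union>k. ?answer k)"
    by blast
  moreover have "(\<Union>k. ?answer k) \<in> \<W>"
    using win moves unfolding winning_II_fin_def by blast
  ultimately show "range (\<lambda>k. some_elem (?answer k)) \<in> \<W>"
    using down by blast
qed

theorem lemma3p1:
  fixes \<X> \<Z> :: "nat set set"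
  assumes "\<forall>A\<in>\<X>. A \<noteq> {}"
    and "\<forall>A B. A \<in> \<Z> \<and> A \<subseteq> B \<longrightarrow> B \<in> \<Z>"
  shows "((\<exists>\<sigma>. winning_I_pt \<X> (- \<Z>) \<sigma>) \<longleftrightarrow> (\<exists>\<sigma>. winning_I_fin \<X> (- \<Z>) \<sigma>))
       \<and> ((\<exists>\<tau>. winning_II_pt \<X> (- \<Z>) \<tau>) \<longleftrightarrow> (\<exists>\<tau>. winning_II_fin \<X> (- \<Z>) \<tau>))"
proof -
  have down: "\<And>A B. B \<in> - \<Z> \<Longrightarrow> A \<subseteq> B \<Longrightarrow> A \<in> - \<Z>"
    using assms(2) by blast
  have "winning_I_fin \<X> (- \<Z>) (\<lambda>h. \<sigma> (map some_elem h))"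
    if "winning_I_pt \<X> (- \<Z>) \<sigma>" for \<sigma>
    using down that by (rule winning_I_pt_imp_winning_I_fin)
  moreover have "winning_II_pt \<X> (- \<Z>) (\<lambda>xs. some_elem (\<tau> xs))"
    if "winning_II_fin \<X> (- \<Z>) \<tau>" for \<tau>
    using down that by (rule winning_II_fin_imp_winning_II_pt)
  ultimately show ?thesis
    using winning_I_fin_imp_winning_I_pt winning_II_pt_imp_winning_II_fin by blast
qed

end
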